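(* For every $n\geq 3$, no quantum behavior for the $n$-cycle scenario is strongly contextual.
   Context: The $n$-cycle scenario has measurements $M_1,\dots,M_n$ with outcomes in $\{0,1\}$ and contexts $\{M_i,M_{i+1}\}$, indices mod $n$. A behavior is a family of probability distributions $p_i$ on $\{0,1\}^2$, $p_i(x,y)$ being the probability that $M_i=x$, $M_{i+1}=y$. It is quantum if there exist a complex separable Hilbert space $\mathcal{H}$, a density operator $\rho$ on $\mathcal{H}$, and for each $i$ orthogonal projectors $P_{i;0},P_{i;1}$ with $P_{i;0}+P_{i;1}=\mathbb{I}$, such that $P_{i;o}$ and $P_{i+1;o'}$ commute for all $i,o,o'$ and $p_i(x,y)=\mathrm{Tr}(P_{i;x}P_{i+1;y}\rho)$. The behavior is strongly contextual if there is no $t\in\{0,1\}^n$ with $p_i(t_i,t_{i+1})>0$ for all $i$. *)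

theory Defs
  imports "HOL-Analysis.Analysis"
begin

text \<open>
  Separable complex Hilbert spaces are modelled concretely, up to unitary
  equivalence, as l2(J) for a countable index set J (here J :: nat set):
  vectors are functions nat => complex vanishing outside J with
  square-summable modulus.  Operators are functions on such vectors; all
  conditions are imposed on vectors of l2(J) only.
\<close>

type_synonym vec = "nat \<Rightarrow> complex"
type_synonym op = "vec \<Rightarrow> vec"

definition l2 :: "nat set \<Rightarrow> vec set" where
  "l2 J = {x. (\<forall>k. k \<notin> J \<longrightarrow> x k = 0) \<and> summable (\<lambda>k. (cmod (x k))^2)}"

definition l2_inner :: "vec \<Rightarrow> vec \<Rightarrow> complex" where
  "l2_inner x y = (\<Sum>k. cnj (x k) * y k)"

definition l2_norm :: "vec \<Rightarrow> real" where
  "l2_norm x = sqrt (\<Sum>k. (cmod (x k))^2)"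

definition basis_vec :: "nat \<Rightarrow> vec" where
  "basis_vec k = (\<lambda>j. if j = k then 1 else 0)"

definition bounded_linear_op :: "nat set \<Rightarrow> op \<Rightarrow> bool" where
  "bounded_linear_op J A \<longleftrightarrow>
     (\<forall>x\<in>l2 J. A x \<in> l2 J) \<and>
     (\<forall>x\<in>l2 J. \<forall>y\<in>l2 J. \<forall>a::complex. A (\<lambda>k. a * x k + y k) = (\<lambda>k. a * A x k + A y k)) \<and>
     (\<exists>C. \<forall>x\<in>l2 J. l2_norm (A x) \<le> C * l2_norm x)"

definition projector :: "nat set \<Rightarrow> op \<Rightarrow> bool" where
  "projector J P \<longleftrightarrow> bounded_linear_op J P \<and>
     (\<forall>x\<in>l2 J. P (P x) = P x) \<and>
     (\<forall>x\<in>l2 J. \<forall>y\<in>l2 J. l2_inner (P x) y = l2_inner x (P y))"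

definition trace_op :: "nat set \<Rightarrow> op \<Rightarrow> complex" where
  "trace_op J T = (\<Sum>\<^sub>\<infinity>k\<in>J. T (basis_vec k) k)"

text \<open>Density operator: bounded linear, positive semidefinite, trace class
  with trace one (for a positive operator the trace is the basis-independent
  sum of the diagonal entries).\<close>
definition density_op :: "nat set \<Rightarrow> op \<Rightarrow> bool" where
  "density_op J \<rho> \<longleftrightarrow> bounded_linear_op J \<rho> \<and>
     (\<forall>x\<in>l2 J. l2_inner x (\<rho> x) \<in> \<real> \<and> Re (l2_inner x (\<rho> x)) \<ge> 0) \<and>
     ((\<lambda>k. Re (\<rho> (basis_vec k) k)) has_sum 1) J"

text \<open>Behaviour of the n-cycle scenario: p i x y is the probability that
  M_i = x and M_(i+1 mod n) = y, for i < n and x, y in {0,1}.\<close>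
type_synonym behavior = "nat \<Rightarrow> nat \<Rightarrow> nat \<Rightarrow> real"

definition quantum_behavior :: "nat \<Rightarrow> behavior \<Rightarrow> bool" where
  "quantum_behavior n p \<longleftrightarrow>
    (\<exists>(J::nat set) (\<rho>::op) (P::nat \<Rightarrow> nat \<Rightarrow> op).
       density_op J \<rho> \<and>
       (\<forall>i<n. \<forall>a\<in>{0,1}. projector J (P i a)) \<and>
       (\<forall>i<n. \<forall>x\<in>l2 J. (\<lambda>k. P i 0 x k + P i 1 x k) = x) \<and>
       (\<forall>i<n. \<forall>a\<in>{0,1}. \<forall>b\<in>{0,1}. \<forall>x\<in>l2 J.
           P i a (P ((i + 1) mod n) b x) = P ((i + 1) mod n) b (P i a x)) \<and>
       (\<forall>i<n. \<forall>x\<in>{0,1}. \<forall>y\<in>{0,1}.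
           complex_of_real (p i x y) =
             trace_op J (\<lambda>v. P i x (P ((i + 1) mod n) y (\<rho> v)))))"

definition strongly_contextual :: "nat \<Rightarrow> behavior \<Rightarrow> bool" where
  "strongly_contextual n p \<longleftrightarrow>
    \<not> (\<exists>t::nat \<Rightarrow> nat. (\<forall>i<n. t i \<in> {0,1}) \<and>
          (\<forall>i<n. p i (t i) (t ((i + 1) mod n)) > 0))"

end

(*
  A density operator rho on l2(J) admits an infinite Cholesky factorisation
  rho = sum_j |l_j><l_j|, built column by column, with l_j m = 0 for m < j.  For a
  self-adjoint idempotent Q this turns the trace into tr (Q rho) = sum_j |Q l_j|^2, so
  the probability of a pair of outcomes is positive as soon as the corresponding product
  of commuting projectors does not annihilate one fixed nonzero vector psi = l_j.

  It remains to find outcomes t_0, ..., t_(n-1) with P_i^(t_i) P_(i+1)^(t_(i+1)) psi <> 0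
  all around the cycle.  Call (i, a) -> (i+1, b) an edge if P_i^a P_(i+1)^b psi <> 0; every
  (i, a) with P_i^a psi <> 0 has an outgoing edge.  If no closed walk exists, the walks
  starting at outcome 0 and at outcome 1 of M_0 never meet, so the edges between
  consecutive layers form a perfect matching.  Along a matching edge P_i^a psi =
  P_(i+1)^b psi, and the walk from outcome 0 returns to outcome 1, whence
  P_0^0 psi = P_0^1 psi, which forces psi = 0.
*)

theory Submission
  imports Defs "HOL-Library.Function_Algebras"
begin

section \<open>Square-summable sequences\<close>

lemma l2_vanishes: "x \<in> l2 J \<Longrightarrow> k \<notin> J \<Longrightarrow> x k = 0"
  by (simp add: l2_def)

lemma l2_summable: "x \<in> l2 J \<Longrightarrow> summable (\<lambda>k. (cmod (x k))^2)"
  by (simp add: l2_def)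

lemma l2_zero: "(\<lambda>k. 0) \<in> l2 J"
  by (simp add: l2_def)

lemma l2_lincomb:
  assumes "x \<in> l2 J" "y \<in> l2 J"
  shows "(\<lambda>k. a * x k + y k) \<in> l2 J"
proof -
  have bound: "(cmod (a * x k + y k))^2 \<le> 2 * (cmod a)^2 * (cmod (x k))^2 + 2 * (cmod (y k))^2" for k
  proof -
    have "(cmod (a * x k + y k))^2 \<le> (cmod (a * x k) + cmod (y k))^2"
      by (simp add: power_mono norm_triangle_ineq)
    also have "\<dots> \<le> 2 * (cmod (a * x k))^2 + 2 * (cmod (y k))^2"
      using sum_squares_bound[of "cmod (a * x k)" "cmod (y k)"] by (simp add: power2_sum)
    finally show ?thesis by (simp add: norm_mult power_mult_distrib)
  qed
  have "summable (\<lambda>k. 2 * (cmod a)^2 * (cmod (x k))^2 + 2 * (cmod (y k))^2)"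
    using assms by (intro summable_add summable_mult l2_summable)
  then have "summable (\<lambda>k. (cmod (a * x k + y k))^2)"
    by (rule summable_comparison_test'[where N = 0]) (use bound in simp)
  with assms show ?thesis
    by (simp add: l2_def)
qed

lemma l2_sum:
  assumes "\<And>j. j \<in> F \<Longrightarrow> v j \<in> l2 J"
  shows "(\<lambda>k. \<Sum>j\<in>F. c j * v j k) \<in> l2 J"
  using assms
proof (induction F rule: infinite_finite_induct)
  case (insert j F)
  then have "(\<lambda>k. c j * v j k + (\<Sum>j\<in>F. c j * v j k)) \<in> l2 J"
    by (intro l2_lincomb) auto
  with insert show ?case by simp
qed (simp_all add: l2_zero)

lemma basis_vec_l2:
  assumes "m \<in> J"
  shows "basis_vec m \<in> l2 J"
proof -
  have "summable (\<lambda>k. (cmod (basis_vec m k))^2)"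
    by (rule summable_finite[of "{m}"]) (auto simp: basis_vec_def)
  with assms show ?thesis
    by (auto simp: l2_def basis_vec_def)
qed

lemma l2_summable_inner_norm:
  assumes "x \<in> l2 J" "y \<in> l2 J"
  shows "summable (\<lambda>k. cmod (cnj (x k) * y k))"
proof -
  have "summable (\<lambda>k. (cmod (x k))^2 / 2 + (cmod (y k))^2 / 2)"
    using assms by (intro summable_add summable_divide l2_summable)
  then show ?thesis
  proof (rule summable_comparison_test'[where N = 0])
    fix k
    show "norm (cmod (cnj (x k) * y k)) \<le> (cmod (x k))^2 / 2 + (cmod (y k))^2 / 2"
      using sum_squares_bound[of "cmod (x k)" "cmod (y k)"] by (simp add: norm_mult)
  qed
qed

lemma l2_summable_inner:
  "x \<in> l2 J \<Longrightarrow> y \<in> l2 J \<Longrightarrow> summable (\<lambda>k. cnj (x k) * y k)"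
  by (rule summable_norm_cancel) (simp add: l2_summable_inner_norm)

lemma l2_inner_lincomb_right:
  assumes "u \<in> l2 J" "x \<in> l2 J" "y \<in> l2 J"
  shows "l2_inner u (\<lambda>k. a * x k + y k) = a * l2_inner u x + l2_inner u y"
proof -
  have "summable (\<lambda>k. cnj (u k) * x k)" "summable (\<lambda>k. cnj (u k) * y k)"
    using assms by (auto intro: l2_summable_inner)
  then have "(\<Sum>k. a * (cnj (u k) * x k) + cnj (u k) * y k)
      = a * (\<Sum>k. cnj (u k) * x k) + (\<Sum>k. cnj (u k) * y k)"
    by (simp add: suminf_add[symmetric] suminf_mult summable_mult)
  then show ?thesis
    by (simp add: l2_inner_def algebra_simps)
qed

lemma l2_inner_cnj:
  assumes "x \<in> l2 J" "y \<in> l2 J"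
  shows "l2_inner x y = cnj (l2_inner y x)"
proof -
  have "(\<lambda>k. cnj (y k) * x k) sums (\<Sum>k. cnj (y k) * x k)"
    using l2_summable_inner[OF assms(2,1)] by (rule summable_sums)
  then have "(\<lambda>k. cnj (cnj (y k) * x k)) sums cnj (\<Sum>k. cnj (y k) * x k)"
    by (rule sums_cnj[THEN iffD2])
  then show ?thesis
    by (simp add: l2_inner_def sums_iff mult.commute)
qed

lemma l2_inner_lincomb_left:
  assumes "u \<in> l2 J" "x \<in> l2 J" "y \<in> l2 J"
  shows "l2_inner (\<lambda>k. a * x k + y k) u = cnj a * l2_inner x u + l2_inner y u"
  using assms l2_lincomb[OF assms(2,3)]
  by (simp add: l2_inner_cnj[of _ J u] l2_inner_lincomb_right)

lemma l2_inner_sum_right: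
  assumes "u \<in> l2 J" "\<And>j. j \<in> F \<Longrightarrow> v j \<in> l2 J"
  shows "l2_inner u (\<lambda>k. \<Sum>j\<in>F. c j * v j k) = (\<Sum>j\<in>F. c j * l2_inner u (v j))"
  using assms(2)
proof (induction F rule: infinite_finite_induct)
  case (insert j F)
  then have "l2_inner u (\<lambda>k. c j * v j k + (\<Sum>j\<in>F. c j * v j k))
      = c j * l2_inner u (v j) + l2_inner u (\<lambda>k. \<Sum>j\<in>F. c j * v j k)"
    using assms(1) by (intro l2_inner_lincomb_right l2_sum) auto
  with insert show ?case by simp
qed (simp_all add: l2_inner_def)

lemma l2_inner_basis_left: "l2_inner (basis_vec m) u = u m"
proof -
  have "(\<lambda>k. cnj (basis_vec m k) * u k) = (\<lambda>k. if k = m then u m else 0)"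
    by (auto simp: basis_vec_def)
  then show ?thesis
    using sums_single[of m "\<lambda>_. u m"] by (simp add: l2_inner_def sums_iff)
qed

lemma l2_inner_basis_right: "u \<in> l2 J \<Longrightarrow> m \<in> J \<Longrightarrow> l2_inner u (basis_vec m) = cnj (u m)"
  by (metis l2_inner_basis_left l2_inner_cnj basis_vec_l2)

lemma l2_inner_self:
  assumes "x \<in> l2 J"
  shows "l2_inner x x = of_real (\<Sum>k. (cmod (x k))^2)"
proof -
  have "cnj (x k) * x k = of_real ((cmod (x k))^2)" for k
    using complex_norm_square[of "x k"] by (simp add: mult.commute)
  then show ?thesis
    by (simp add: l2_inner_def suminf_of_real l2_summable[OF assms])
qed

text \<open>Here and in \<open>selfadjoint_idempotent\<close> the norm bound of \<^const>\<open>bounded_linear_op\<close>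
  is dropped: the argument never uses it.\<close>

definition l2_linear :: "nat set \<Rightarrow> op \<Rightarrow> bool" where
  "l2_linear J A \<longleftrightarrow> (\<forall>x\<in>l2 J. A x \<in> l2 J) \<and>
     (\<forall>x\<in>l2 J. \<forall>y\<in>l2 J. \<forall>a. A (\<lambda>k. a * x k + y k) = (\<lambda>k. a * A x k + A y k))"

lemma l2_linear_l2: "l2_linear J A \<Longrightarrow> x \<in> l2 J \<Longrightarrow> A x \<in> l2 J"
  by (simp add: l2_linear_def)

lemma l2_linear_lincomb:
  "l2_linear J A \<Longrightarrow> x \<in> l2 J \<Longrightarrow> y \<in> l2 J \<Longrightarrow> A (\<lambda>k. a * x k + y k) = (\<lambda>k. a * A x k + A y k)"
  by (simp add: l2_linear_def)

lemma bounded_linear_op_imp_l2_linear: "bounded_linear_op J A \<Longrightarrow> l2_linear J A"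
  by (simp add: bounded_linear_op_def l2_linear_def)

lemma l2_linear_zero:
  assumes "l2_linear J A"
  shows "A (\<lambda>k. 0) = (\<lambda>k. 0)"
proof -
  have "A (\<lambda>k. 1 * 0 + 0) = (\<lambda>k. 1 * A (\<lambda>k. 0) k + A (\<lambda>k. 0) k)"
    by (rule l2_linear_lincomb[OF assms l2_zero l2_zero])
  then show ?thesis
    by (simp add: fun_eq_iff)
qed

lemma l2_linear_sum:
  assumes "l2_linear J A" "\<And>j. j \<in> F \<Longrightarrow> v j \<in> l2 J"
  shows "A (\<lambda>k. \<Sum>j\<in>F. c j * v j k) = (\<lambda>k. \<Sum>j\<in>F. c j * A (v j) k)"
  using assms(2)
proof (induction F rule: infinite_finite_induct)
  case (insert j F)
  then have "A (\<lambda>k. c j * v j k + (\<Sum>j\<in>F. c j * v j k))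
      = (\<lambda>k. c j * A (v j) k + A (\<lambda>k. \<Sum>j\<in>F. c j * v j k) k)"
    using assms(1) by (intro l2_linear_lincomb l2_sum) auto
  with insert show ?case by simp
qed (simp_all add: l2_linear_zero[OF assms(1)])

definition selfadjoint_idempotent :: "nat set \<Rightarrow> op \<Rightarrow> bool" where
  "selfadjoint_idempotent J Q \<longleftrightarrow> l2_linear J Q \<and> (\<forall>x\<in>l2 J. Q (Q x) = Q x) \<and>
     (\<forall>x\<in>l2 J. \<forall>y\<in>l2 J. l2_inner (Q x) y = l2_inner x (Q y))"

lemma projector_imp_selfadjoint_idempotent: "projector J P \<Longrightarrow> selfadjoint_idempotent J P"
  by (simp add: projector_def selfadjoint_idempotent_def bounded_linear_op_imp_l2_linear)

lemma selfadjoint_idempotent_comp: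
  assumes A: "selfadjoint_idempotent J A" and B: "selfadjoint_idempotent J B"
    and commute: "\<And>x. x \<in> l2 J \<Longrightarrow> A (B x) = B (A x)"
  shows "selfadjoint_idempotent J (\<lambda>x. A (B x))"
proof -
  have lin: "l2_linear J A" "l2_linear J B"
    using A B by (simp_all add: selfadjoint_idempotent_def)
  then have "l2_linear J (\<lambda>x. A (B x))"
    by (simp add: l2_linear_def)
  moreover have "A (B (A (B x))) = A (B x)" if "x \<in> l2 J" for x
    using that A B commute lin by (simp add: selfadjoint_idempotent_def l2_linear_l2)
  moreover have "l2_inner (A (B x)) y = l2_inner x (A (B y))" if "x \<in> l2 J" "y \<in> l2 J" for x y
  proof -
    have "l2_inner (A (B x)) y = l2_inner x (B (A y))"
      using that A B lin by (simp add: selfadjoint_idempotent_def l2_linear_l2)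
    with that commute show ?thesis by simp
  qed
  ultimately show ?thesis
    by (simp add: selfadjoint_idempotent_def)
qed

lemma l2_inner_norm_sum_le:
  assumes "x \<in> l2 J" "y \<in> l2 J"
  shows "2 * (\<Sum>k. cmod (cnj (x k) * y k)) \<le> (\<Sum>k. (cmod (x k))^2) + (\<Sum>k. (cmod (y k))^2)"
proof -
  have "(\<Sum>k. cmod (cnj (x k) * y k)) \<le> (\<Sum>k. ((cmod (x k))^2 + (cmod (y k))^2) / 2)"
  proof (rule suminf_le)
    show "cmod (cnj (x k) * y k) \<le> ((cmod (x k))^2 + (cmod (y k))^2) / 2" for k
      using sum_squares_bound[of "cmod (x k)" "cmod (y k)"] by (simp add: norm_mult)
  qed (use assms in \<open>auto intro: l2_summable_inner_norm summable_divide summable_add l2_summable\<close>)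
  also have "\<dots> = ((\<Sum>k. (cmod (x k))^2) + (\<Sum>k. (cmod (y k))^2)) / 2"
    using assms by (simp add: suminf_divide suminf_add summable_add l2_summable)
  finally show ?thesis by simp
qed

lemma norm_l2_inner_le:
  "x \<in> l2 J \<Longrightarrow> y \<in> l2 J \<Longrightarrow> cmod (l2_inner x y) \<le> (\<Sum>k. cmod (cnj (x k) * y k))"
  unfolding l2_inner_def by (rule summable_norm) (rule l2_summable_inner_norm)

lemma selfadjoint_idempotent_inner_self:
  assumes Q: "selfadjoint_idempotent J Q" and x: "x \<in> l2 J"
  shows "l2_inner x (Q x) = of_real (\<Sum>k. (cmod (Q x k))^2)"
proof -
  have Qx: "Q x \<in> l2 J"
    using Q x by (simp add: selfadjoint_idempotent_def l2_linear_l2)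
  have "l2_inner (Q x) (Q x) = l2_inner x (Q (Q x))"
    using Q x Qx by (simp add: selfadjoint_idempotent_def)
  also have "Q (Q x) = Q x"
    using Q x by (simp add: selfadjoint_idempotent_def)
  finally show ?thesis
    using l2_inner_self[OF Qx] by simp
qed

lemma selfadjoint_idempotent_norm_bounds:
  assumes Q: "selfadjoint_idempotent J Q" and x: "x \<in> l2 J"
  shows "(\<Sum>k. (cmod (Q x k))^2) \<le> (\<Sum>k. (cmod (x k))^2)"
    and "(\<Sum>k. cmod (cnj (x k) * Q x k)) \<le> (\<Sum>k. (cmod (x k))^2)"
proof -
  have Qx: "Q x \<in> l2 J"
    using Q x by (simp add: selfadjoint_idempotent_def l2_linear_l2)
  have "(\<Sum>k. (cmod (Q x k))^2) = cmod (l2_inner x (Q x))"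
    using selfadjoint_idempotent_inner_self[OF Q x] l2_summable[OF Qx] by (simp add: suminf_nonneg)
  also have "\<dots> \<le> (\<Sum>k. cmod (cnj (x k) * Q x k))"
    using x Qx by (rule norm_l2_inner_le)
  finally have "(\<Sum>k. (cmod (Q x k))^2) \<le> (\<Sum>k. cmod (cnj (x k) * Q x k))" .
  moreover have "2 * (\<Sum>k. cmod (cnj (x k) * Q x k)) \<le> (\<Sum>k. (cmod (x k))^2) + (\<Sum>k. (cmod (Q x k))^2)"
    using x Qx by (rule l2_inner_norm_sum_le)
  ultimately show "(\<Sum>k. (cmod (Q x k))^2) \<le> (\<Sum>k. (cmod (x k))^2)"
    by linarith
  with \<open>2 * (\<Sum>k. cmod (cnj (x k) * Q x k)) \<le> _\<close>
  show "(\<Sum>k. cmod (cnj (x k) * Q x k)) \<le> (\<Sum>k. (cmod (x k))^2)"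
    by linarith
qed

lemma complex_quadratic_nonneg_imp_le:
  fixes z :: complex and b c :: real
  assumes c: "c \<ge> 0" and nonneg: "\<And>t. 0 \<le> (cmod t)^2 * c + 2 * Re (t * z) + b"
  shows "(cmod z)^2 \<le> b * c"
proof (cases "c = 0")
  case True
  have "z = 0"
  proof (rule ccontr)
    assume "z \<noteq> 0"
    define s where "s = (b + 1) / (2 * (cmod z)^2)"
    have "Re (- of_real s * cnj z * z) = - s * (cmod z)^2"
      using cmod_power2[of z] by (simp add: power2_eq_square algebra_simps)
    then have "2 * s * (cmod z)^2 \<le> b"
      using nonneg[of "- of_real s * cnj z"] True by simp
    moreover have "2 * s * (cmod z)^2 = b + 1"
      using \<open>z \<noteq> 0\<close> by (simp add: s_def)
    ultimately show False by simp
  qed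
  with True show ?thesis
    by simp
next
  case False
  with c have c: "c > 0"
    by simp
  have "Re (- cnj z / of_real c * z) = - ((cmod z)^2) / c"
    using cmod_power2[of z] c by (simp add: power2_eq_square field_simps)
  then have "0 \<le> (cmod z)^2 / c^2 * c - 2 * ((cmod z)^2 / c) + b"
    using nonneg[of "- cnj z / of_real c"] c by (simp add: norm_divide power_divide)
  also have "(cmod z)^2 / c^2 * c = (cmod z)^2 / c"
    using c by (simp add: power2_eq_square)
  finally have "(cmod z)^2 / c \<le> b" by simp
  with c show ?thesis
    by (simp add: divide_le_eq)
qed

lemma hermitian_form_Cauchy_Schwarz:
  fixes B :: "vec \<Rightarrow> vec \<Rightarrow> complex"
  assumes closed: "\<And>x y a. x \<in> S \<Longrightarrow> y \<in> S \<Longrightarrow> (\<lambda>k. a * x k + y k) \<in> S"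
    and linear: "\<And>u x y a. u \<in> S \<Longrightarrow> x \<in> S \<Longrightarrow> y \<in> S \<Longrightarrow> B u (\<lambda>k. a * x k + y k) = a * B u x + B u y"
    and hermitian: "\<And>u v. u \<in> S \<Longrightarrow> v \<in> S \<Longrightarrow> B u v = cnj (B v u)"
    and nonneg: "\<And>u. u \<in> S \<Longrightarrow> Re (B u u) \<ge> 0"
    and u: "u \<in> S" and v: "v \<in> S"
  shows "(cmod (B u v))^2 \<le> Re (B u u) * Re (B v v)"
proof (rule complex_quadratic_nonneg_imp_le)
  fix t
  define w where "w = (\<lambda>k. t * v k + u k)"
  have w: "w \<in> S"
    unfolding w_def using v u by (rule closed)
  have Bvv: "cnj (B v v) = B v v" and Buu: "cnj (B u u) = B u u" and Bvu: "cnj (B v u) = B u v"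
    using hermitian[OF v v] hermitian[OF u u] hermitian[OF u v] by simp_all
  have "B w w = t * B w v + B w u"
    using linear[OF w v u, of t] unfolding w_def[symmetric] .
  also have "B w v = cnj (t * B v v + B v u)"
    using hermitian[OF w v] linear[OF v v u, of t] unfolding w_def[symmetric] by simp
  also have "B w u = cnj (t * B u v + B u u)"
    using hermitian[OF w u] linear[OF u v u, of t] unfolding w_def[symmetric] by simp
  finally have "B w w = (t * cnj t) * B v v + (t * B u v + cnj (t * B u v)) + B u u"
    using Bvv Buu Bvu by (simp add: algebra_simps)
  moreover have "t * cnj t = of_real ((cmod t)^2)"
    by (rule complex_norm_square[symmetric])
  ultimately show "0 \<le> (cmod t)^2 * Re (B v v) + 2 * Re (t * B u v) + Re (B u u)"
    using nonneg[OF w] by simp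
qed (use nonneg v in simp)

lemma density_op_l2_linear: "density_op J \<rho> \<Longrightarrow> l2_linear J \<rho>"
  by (simp add: density_op_def bounded_linear_op_imp_l2_linear)

lemma density_op_inner_real:
  "density_op J \<rho> \<Longrightarrow> x \<in> l2 J \<Longrightarrow> Im (l2_inner x (\<rho> x)) = 0"
  by (simp add: density_op_def complex_is_Real_iff)

lemma density_op_inner_nonneg:
  "density_op J \<rho> \<Longrightarrow> x \<in> l2 J \<Longrightarrow> Re (l2_inner x (\<rho> x)) \<ge> 0"
  by (simp add: density_op_def)

lemma density_op_hermitian:
  assumes \<rho>: "density_op J \<rho>" and u: "u \<in> l2 J" and v: "v \<in> l2 J"
  shows "l2_inner u (\<rho> v) = cnj (l2_inner v (\<rho> u))"
proof -
  have lin: "l2_linear J \<rho>"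
    using \<rho> by (rule density_op_l2_linear)
  have expand: "l2_inner (\<lambda>k. t * v k + u k) (\<rho> (\<lambda>k. t * v k + u k))
      = cnj t * t * l2_inner v (\<rho> v) + cnj t * l2_inner v (\<rho> u) + t * l2_inner u (\<rho> v)
        + l2_inner u (\<rho> u)" for t
  proof -
    have \<rho>u: "\<rho> u \<in> l2 J" and \<rho>v: "\<rho> v \<in> l2 J"
      using lin u v by (simp_all add: l2_linear_l2)
    have "l2_inner (\<lambda>k. t * v k + u k) (\<rho> (\<lambda>k. t * v k + u k))
        = l2_inner (\<lambda>k. t * v k + u k) (\<lambda>k. t * \<rho> v k + \<rho> u k)"
      by (simp only: l2_linear_lincomb[OF lin v u])
    also have "\<dots> = cnj t * l2_inner v (\<lambda>k. t * \<rho> v k + \<rho> u k)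
        + l2_inner u (\<lambda>k. t * \<rho> v k + \<rho> u k)"
      using l2_lincomb[OF \<rho>v \<rho>u] v u by (rule l2_inner_lincomb_left)
    finally show ?thesis
      using l2_inner_lincomb_right[OF v \<rho>v \<rho>u] l2_inner_lincomb_right[OF u \<rho>v \<rho>u]
      by (simp add: algebra_simps)
  qed
  have "Im (l2_inner (\<lambda>k. t * v k + u k) (\<rho> (\<lambda>k. t * v k + u k))) = 0" for t
    using \<rho> l2_lincomb[OF v u] by (rule density_op_inner_real)
  from this[of 1] this[of \<i>] show ?thesis
    unfolding expand
    using density_op_inner_real[OF \<rho> u] density_op_inner_real[OF \<rho> v]
    by (simp add: complex_eq_iff)
qed

section \<open>Cholesky factorisation of a density operator\<close>

locale density_operator =
  fixes J :: "nat set" and \<rho> :: op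
  assumes density: "density_op J \<rho>"
begin

lemma rho_l2_linear: "l2_linear J \<rho>"
  using density by (rule density_op_l2_linear)

text \<open>Column \<open>k\<close> of \<open>\<rho>\<close> minus what the earlier columns already account for,
  normalised by the square root of its diagonal entry (the pivot); a nonpositive pivot yields
  the zero vector.\<close>

function chol :: "nat \<Rightarrow> vec" where
  "chol k = (let r = (\<lambda>i. \<rho> (basis_vec k) i - (\<Sum>j<k. cnj (chol j k) * chol j i)) in
     if k \<in> J \<and> Re (r k) > 0 then (\<lambda>i. r i / of_real (sqrt (Re (r k)))) else (\<lambda>i. 0))"
  by auto
termination by (relation "Wellfounded.measure id") auto

declare chol.simps [simp del]

definition chol_resid :: "nat \<Rightarrow> nat \<Rightarrow> vec" where
  "chol_resid k m = (\<lambda>i. \<rho> (basis_vec m) i - (\<Sum>j<k. cnj (chol j m) * chol j i))"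

definition pivot :: "nat \<Rightarrow> real" where
  "pivot k = Re (chol_resid k k k)"

lemma chol_eq:
  "chol k = (if k \<in> J \<and> pivot k > 0
     then (\<lambda>i. chol_resid k k i / of_real (sqrt (pivot k))) else (\<lambda>i. 0))"
  by (subst chol.simps) (simp add: chol_resid_def pivot_def Let_def)

lemma chol_l2_imp_chol_resid_l2:
  assumes "\<And>j. j < k \<Longrightarrow> chol j \<in> l2 J" "m \<in> J"
  shows "chol_resid k m \<in> l2 J"
proof -
  have "(\<lambda>i. (-1) * (\<Sum>j\<in>{..<k}. cnj (chol j m) * chol j i) + \<rho> (basis_vec m) i) \<in> l2 J"
    using assms by (intro l2_lincomb l2_sum l2_linear_l2[OF rho_l2_linear] basis_vec_l2) auto
  then show ?thesis
    by (simp add: chol_resid_def)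
qed

lemma chol_l2: "chol k \<in> l2 J"
proof (induction k rule: less_induct)
  case (less k)
  show ?case
  proof (cases "k \<in> J \<and> pivot k > 0")
    case True
    then have "(\<lambda>i. of_real (1 / sqrt (pivot k)) * chol_resid k k i + 0) \<in> l2 J"
      using less by (intro l2_lincomb chol_l2_imp_chol_resid_l2 l2_zero) auto
    with True show ?thesis
      by (simp add: chol_eq[of k] divide_inverse mult.commute)
  next
    case False
    then have "chol k = (\<lambda>i. 0)"
      using chol_eq[of k] by auto
    then show ?thesis
      by (simp add: l2_zero)
  qed
qed

lemma chol_resid_l2: "m \<in> J \<Longrightarrow> chol_resid k m \<in> l2 J"
  using chol_l2_imp_chol_resid_l2 chol_l2 by blast

definition resid_form :: "nat \<Rightarrow> vec \<Rightarrow> vec \<Rightarrow> complex" where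
  "resid_form k u v = l2_inner u (\<rho> v) - (\<Sum>j<k. l2_inner u (chol j) * l2_inner (chol j) v)"

lemma resid_form_basis:
  assumes u: "u \<in> l2 J" and m: "m \<in> J"
  shows "resid_form k u (basis_vec m) = l2_inner u (chol_resid k m)"
proof -
  define S where "S = (\<lambda>i. \<Sum>j\<in>{..<k}. cnj (chol j m) * chol j i)"
  have S: "S \<in> l2 J"
    unfolding S_def by (intro l2_sum chol_l2)
  have R: "\<rho> (basis_vec m) \<in> l2 J"
    using m by (intro l2_linear_l2[OF rho_l2_linear] basis_vec_l2)
  have "chol_resid k m = (\<lambda>i. (-1) * S i + \<rho> (basis_vec m) i)"
    by (simp add: chol_resid_def S_def)
  then have "l2_inner u (chol_resid k m) = - l2_inner u S + l2_inner u (\<rho> (basis_vec m))"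
    using l2_inner_lincomb_right[OF u S R, of "-1"] by simp
  moreover have "l2_inner u S = (\<Sum>j<k. cnj (chol j m) * l2_inner u (chol j))"
    unfolding S_def by (simp add: l2_inner_sum_right[OF u] chol_l2)
  ultimately show ?thesis
    using m by (simp add: resid_form_def l2_inner_basis_right[OF chol_l2] mult.commute)
qed

lemma resid_form_lincomb:
  assumes "u \<in> l2 J" "x \<in> l2 J" "y \<in> l2 J"
  shows "resid_form k u (\<lambda>i. a * x i + y i) = a * resid_form k u x + resid_form k u y"
proof -
  have "l2_inner u (\<rho> (\<lambda>i. a * x i + y i)) = a * l2_inner u (\<rho> x) + l2_inner u (\<rho> y)"
    using assms by (simp add: l2_linear_lincomb[OF rho_l2_linear] l2_inner_lincomb_right l2_linear_l2[OF rho_l2_linear])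
  moreover have "l2_inner (chol j) (\<lambda>i. a * x i + y i) = a * l2_inner (chol j) x + l2_inner (chol j) y" for j
    using chol_l2 assms(2,3) by (rule l2_inner_lincomb_right)
  ultimately show ?thesis
    by (simp add: resid_form_def algebra_simps sum.distrib sum_distrib_left sum_subtractf)
qed

lemma resid_form_hermitian:
  assumes "u \<in> l2 J" "v \<in> l2 J"
  shows "resid_form k u v = cnj (resid_form k v u)"
proof -
  have "l2_inner u (chol j) * l2_inner (chol j) v = cnj (l2_inner v (chol j) * l2_inner (chol j) u)" for j
    using l2_inner_cnj[OF assms(1) chol_l2] l2_inner_cnj[OF chol_l2 assms(2)] by simp
  then show ?thesis
    using density_op_hermitian[OF density assms] by (simp add: resid_form_def cnj_sum)
qed

lemma resid_form_Suc:
  "resid_form (Suc k) u v = resid_form k u v - l2_inner u (chol k) * l2_inner (chol k) v"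
  by (simp add: resid_form_def)

lemma resid_form_Cauchy_Schwarz:
  assumes "\<forall>w\<in>l2 J. Re (resid_form k w w) \<ge> 0" "u \<in> l2 J" "v \<in> l2 J"
  shows "(cmod (resid_form k u v))^2 \<le> Re (resid_form k u u) * Re (resid_form k v v)"
  by (rule hermitian_form_Cauchy_Schwarz[where S = "l2 J",
        OF l2_lincomb resid_form_lincomb resid_form_hermitian]) (use assms in auto)

lemma resid_form_pivot: "k \<in> J \<Longrightarrow> resid_form k (basis_vec k) (basis_vec k) = of_real (pivot k)"
  using resid_form_hermitian[OF basis_vec_l2 basis_vec_l2, of k k k]
  by (simp add: resid_form_basis basis_vec_l2 l2_inner_basis_left pivot_def complex_eq_iff)

lemma l2_inner_chol:
  assumes u: "u \<in> l2 J" and k: "k \<in> J" "pivot k > 0"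
  shows "l2_inner u (chol k) = resid_form k u (basis_vec k) / of_real (sqrt (pivot k))"
proof -
  have "chol k = (\<lambda>i. (1 / of_real (sqrt (pivot k))) * chol_resid k k i + 0)"
    using k by (simp add: chol_eq[of k])
  then have "l2_inner u (chol k)
      = 1 / of_real (sqrt (pivot k)) * l2_inner u (chol_resid k k) + l2_inner u (\<lambda>i. 0)"
    using l2_inner_lincomb_right[OF u chol_resid_l2[OF k(1)] l2_zero] by (simp only:)
  then show ?thesis
    by (simp add: l2_inner_def resid_form_basis[OF u k(1)])
qed

lemma resid_form_Suc_pivot:
  assumes k: "k \<in> J" "pivot k > 0" and u: "u \<in> l2 J" and v: "v \<in> l2 J"
  shows "resid_form (Suc k) u v
    = resid_form k u v - resid_form k u (basis_vec k) * resid_form k (basis_vec k) v / of_real (pivot k)"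
proof -
  have "l2_inner (chol k) v = cnj (l2_inner v (chol k))"
    using chol_l2 v by (rule l2_inner_cnj)
  also have "\<dots> = resid_form k (basis_vec k) v / of_real (sqrt (pivot k))"
    using k v basis_vec_l2[OF k(1)] by (simp add: l2_inner_chol resid_form_hermitian[of "basis_vec k"])
  finally have "l2_inner (chol k) v = resid_form k (basis_vec k) v / of_real (sqrt (pivot k))" .
  moreover have "(of_real (sqrt (pivot k)))^2 = (of_real (pivot k) :: complex)"
    using k(2) by (metis of_real_power less_imp_le real_sqrt_pow2)
  ultimately show ?thesis
    using k u by (simp add: resid_form_Suc l2_inner_chol power2_eq_square[symmetric])
qed

lemma resid_form_Suc_degenerate:
  assumes "\<not> (k \<in> J \<and> pivot k > 0)"
  shows "resid_form (Suc k) u v = resid_form k u v"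
proof -
  have "chol k = (\<lambda>i. 0)"
    using assms chol_eq[of k] by auto
  then show ?thesis
    by (simp add: resid_form_Suc l2_inner_def)
qed

lemma resid_form_Cauchy_Schwarz_pivot:
  assumes nonneg: "\<forall>w\<in>l2 J. Re (resid_form k w w) \<ge> 0" and u: "u \<in> l2 J" and k: "k \<in> J"
  shows "(cmod (resid_form k u (basis_vec k)))^2 \<le> Re (resid_form k u u) * pivot k"
  using resid_form_Cauchy_Schwarz[OF nonneg u basis_vec_l2[OF k]] by (simp add: resid_form_pivot[OF k])

lemma resid_form_Suc_nonneg:
  assumes nonneg: "\<forall>w\<in>l2 J. Re (resid_form k w w) \<ge> 0" and u: "u \<in> l2 J"
  shows "Re (resid_form (Suc k) u u) \<ge> 0"
proof (cases "k \<in> J \<and> pivot k > 0")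
  case True
  have "resid_form k u (basis_vec k) * resid_form k (basis_vec k) u
      = of_real ((cmod (resid_form k u (basis_vec k)))^2)"
    using resid_form_hermitian[OF basis_vec_l2 u, of k k] True
    by (simp add: complex_norm_square[symmetric])
  with True u resid_form_Cauchy_Schwarz_pivot[OF nonneg u] show ?thesis
    by (simp add: resid_form_Suc_pivot divide_le_eq mult.commute)
next
  case False
  with nonneg u show ?thesis
    by (simp add: resid_form_Suc_degenerate)
qed

lemma resid_form_Suc_vanishes:
  assumes nonneg: "\<forall>w\<in>l2 J. Re (resid_form k w w) \<ge> 0"
    and vanish: "\<forall>m\<in>J. m < k \<longrightarrow> (\<forall>w\<in>l2 J. resid_form k w (basis_vec m) = 0)"
    and m: "m \<in> J" "m \<le> k" and u: "u \<in> l2 J"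
  shows "resid_form (Suc k) u (basis_vec m) = 0"
proof (cases "k \<in> J \<and> pivot k > 0")
  case True
  show ?thesis
  proof (cases "m = k")
    case True
    with \<open>k \<in> J \<and> pivot k > 0\<close> u show ?thesis
      by (simp add: resid_form_Suc_pivot basis_vec_l2 resid_form_pivot)
  next
    case False
    with m vanish True u show ?thesis
      by (simp add: resid_form_Suc_pivot basis_vec_l2)
  qed
next
  case False
  show ?thesis
  proof (cases "m = k")
    case True
    with m have k: "k \<in> J"
      by simp
    then have "0 \<le> pivot k"
      using nonneg basis_vec_l2[OF k] by (auto simp: resid_form_pivot[OF k])
    with False k have "pivot k = 0"
      by linarith
    with resid_form_Cauchy_Schwarz_pivot[OF nonneg u] m True False show ?thesis
      by (simp add: resid_form_Suc_degenerate)
  next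
    case False
    with m vanish u \<open>\<not> (k \<in> J \<and> pivot k > 0)\<close> show ?thesis
      by (simp add: resid_form_Suc_degenerate)
  qed
qed

lemma resid_form_invariant:
  "(\<forall>u\<in>l2 J. Re (resid_form k u u) \<ge> 0) \<and>
   (\<forall>m\<in>J. m < k \<longrightarrow> (\<forall>u\<in>l2 J. resid_form k u (basis_vec m) = 0))"
proof (induction k)
  case 0
  show ?case
    by (simp add: resid_form_def density_op_inner_nonneg[OF density])
next
  case (Suc k)
  then show ?case
    using resid_form_Suc_nonneg resid_form_Suc_vanishes by (simp add: less_Suc_eq_le)
qed

lemma rho_basis_vec_eq_chol_sum:
  assumes m: "m \<in> J"
  shows "\<rho> (basis_vec m) = (\<lambda>i. \<Sum>j<Suc m. cnj (chol j m) * chol j i)"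
proof -
  have "chol_resid (Suc m) m i = 0" for i
  proof (cases "i \<in> J")
    case True
    then have "chol_resid (Suc m) m i = resid_form (Suc m) (basis_vec i) (basis_vec m)"
      using m by (simp add: resid_form_basis basis_vec_l2 l2_inner_basis_left)
    with True m resid_form_invariant[of "Suc m"] show ?thesis
      by (simp add: basis_vec_l2)
  next
    case False
    then show ?thesis
      using m by (simp add: l2_vanishes[OF chol_resid_l2])
  qed
  then show ?thesis
    by (simp add: chol_resid_def fun_eq_iff)
qed

lemma chol_below_diagonal:
  assumes m: "m \<in> J" and "m < j"
  shows "chol j m = 0"
proof (cases "j \<in> J \<and> pivot j > 0")
  case True
  have "resid_form j (basis_vec m) (basis_vec j) = cnj (resid_form j (basis_vec j) (basis_vec m))"
    using m True by (blast intro: resid_form_hermitian basis_vec_l2)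
  also have "\<dots> = 0"
    using resid_form_invariant[of j] m \<open>m < j\<close> True by (simp add: basis_vec_l2)
  finally show ?thesis
    using l2_inner_chol[OF basis_vec_l2[OF m] True[THEN conjunct1] True[THEN conjunct2]]
    by (simp add: l2_inner_basis_left)
next
  case False
  then show ?thesis
    using chol_eq[of j] by auto
qed

lemma chol_column_has_sum:
  "((\<lambda>j. (cmod (chol j m))^2) has_sum (if m \<in> J then Re (\<rho> (basis_vec m) m) else 0)) UNIV"
proof (cases "m \<in> J")
  case True
  have "cnj (chol j m) * chol j m = of_real ((cmod (chol j m))^2)" for j
    using complex_norm_square[of "chol j m"] by (simp add: mult.commute)
  then have "\<rho> (basis_vec m) m = (\<Sum>j<Suc m. of_real ((cmod (chol j m))^2))"
    by (simp add: rho_basis_vec_eq_chol_sum[OF True])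
  then have "Re (\<rho> (basis_vec m) m) = (\<Sum>j<Suc m. (cmod (chol j m))^2)"
    by simp
  with True show ?thesis
    by (intro has_sum_finite_neutralI[of "{..<Suc m}"]) (auto simp: chol_below_diagonal)
next
  case False
  then show ?thesis
    by (simp add: l2_vanishes[OF chol_l2])
qed

lemma chol_norm_summable: "(\<lambda>j. \<Sum>m. (cmod (chol j m))^2) summable_on UNIV"
proof -
  have "((\<lambda>m. Re (\<rho> (basis_vec m) m)) has_sum 1) J"
    using density by (simp add: density_op_def)
  then have diag: "((\<lambda>m. if m \<in> J then Re (\<rho> (basis_vec m) m) else 0) has_sum 1) UNIV"
    by (subst has_sum_cong_neutral[where T = J and g = "\<lambda>m. Re (\<rho> (basis_vec m) m)"]) auto
  have "(\<lambda>(m, j). (cmod (chol j m))^2) summable_on UNIV \<times> UNIV"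
    using chol_column_has_sum diag by (intro summable_on_SigmaI) (auto simp: summable_on_def)
  then have "(\<lambda>(j, m). (cmod (chol j m))^2) summable_on UNIV \<times> UNIV"
    by (subst summable_on_swap) (simp add: case_prod_unfold)
  then have "(\<lambda>j. infsum (\<lambda>m. (cmod (chol j m))^2) UNIV) summable_on UNIV"
    by (rule summable_on_Sigma_banach[where f = "\<lambda>j m. (cmod (chol j m))^2", simplified])
  moreover have "infsum (\<lambda>m. (cmod (chol j m))^2) UNIV = (\<Sum>m. (cmod (chol j m))^2)" for j
    using l2_summable[OF chol_l2] by (intro infsumI sums_nonneg_imp_has_sum) (auto simp: summable_sums)
  ultimately show ?thesis
    by simp
qed

lemma chol_selfadjoint_idempotent_summable:
  assumes Q: "selfadjoint_idempotent J Q"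
  shows "(\<lambda>(j, m). cnj (chol j m) * Q (chol j) m) summable_on UNIV \<times> UNIV"
proof -
  define g where "g j m = cnj (chol j m) * Q (chol j) m" for j m
  have Qchol: "Q (chol j) \<in> l2 J" for j
    using Q chol_l2 by (simp add: selfadjoint_idempotent_def l2_linear_l2)
  have row: "((\<lambda>m. norm (g j m)) has_sum (\<Sum>m. norm (g j m))) UNIV" for j
    using l2_summable_inner_norm[OF chol_l2 Qchol, of j]
    by (intro sums_nonneg_imp_has_sum) (auto simp: g_def summable_sums)
  have "(\<lambda>j. \<Sum>m. norm (g j m)) summable_on UNIV"
    using Q chol_l2 by (intro summable_on_comparison_test[OF chol_norm_summable])
      (auto simp: g_def selfadjoint_idempotent_norm_bounds(2) suminf_nonneg
        l2_summable_inner_norm[OF chol_l2 Qchol])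
  then have "(\<lambda>(j, m). norm (g j m)) summable_on UNIV \<times> UNIV"
    using row by (intro summable_on_SigmaI[where g = "\<lambda>j. \<Sum>m. norm (g j m)"]) auto
  then have "(\<lambda>x. norm ((\<lambda>(j, m). g j m) x)) summable_on UNIV \<times> UNIV"
    by (simp add: case_prod_unfold)
  from abs_summable_summable[OF this] show ?thesis
    by (simp add: g_def)
qed

lemma trace_selfadjoint_idempotent:
  assumes Q: "selfadjoint_idempotent J Q"
  shows "trace_op J (\<lambda>v. Q (\<rho> v)) = (\<Sum>\<^sub>\<infinity>j. l2_inner (chol j) (Q (chol j)))"
proof -
  define g where "g j m = cnj (chol j m) * Q (chol j) m" for j m
  have lin: "l2_linear J Q"
    using Q by (simp add: selfadjoint_idempotent_def)
  have Qchol: "Q (chol j) \<in> l2 J" for j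
    using lin chol_l2 by (rule l2_linear_l2)
  have column: "Q (\<rho> (basis_vec m)) m = (\<Sum>\<^sub>\<infinity>j. g j m)" if m: "m \<in> J" for m
  proof -
    have "Q (\<rho> (basis_vec m)) = (\<lambda>i. \<Sum>j\<in>{..<Suc m}. cnj (chol j m) * Q (chol j) i)"
      unfolding rho_basis_vec_eq_chol_sum[OF m] by (rule l2_linear_sum[OF lin chol_l2])
    then have "Q (\<rho> (basis_vec m)) m = (\<Sum>j<Suc m. g j m)"
      by (simp add: g_def)
    also have "\<dots> = (\<Sum>\<^sub>\<infinity>j. g j m)"
      by (rule infsumI[symmetric], rule has_sum_finite_neutralI[of "{..<Suc m}"])
        (auto simp: g_def chol_below_diagonal[OF m])
    finally show ?thesis .
  qed
  have "trace_op J (\<lambda>v. Q (\<rho> v)) = (\<Sum>\<^sub>\<infinity>m. \<Sum>\<^sub>\<infinity>j. g j m)"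
    unfolding trace_op_def
    by (rule infsum_cong_neutral) (auto simp: column g_def l2_vanishes[OF chol_l2])
  also have "\<dots> = (\<Sum>\<^sub>\<infinity>j. \<Sum>\<^sub>\<infinity>m. g j m)"
    using chol_selfadjoint_idempotent_summable[OF Q]
    by (subst infsum_swap_banach) (simp_all add: summable_on_swap case_prod_unfold g_def)
  also have "\<dots> = (\<Sum>\<^sub>\<infinity>j. l2_inner (chol j) (Q (chol j)))"
    unfolding l2_inner_def g_def
    using l2_summable_inner_norm[OF chol_l2 Qchol] l2_summable_inner[OF chol_l2 Qchol]
    by (intro infsum_cong infsumI norm_summable_imp_has_sum) (auto simp: summable_sums)
  finally show ?thesis .
qed

lemma trace_selfadjoint_idempotent_pos:
  assumes Q: "selfadjoint_idempotent J Q" and nonzero: "Q (chol j0) \<noteq> 0"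
  shows "Re (trace_op J (\<lambda>v. Q (\<rho> v))) > 0"
proof -
  define X where "X j = (\<Sum>m. (cmod (Q (chol j) m))^2)" for j
  have Qchol: "Q (chol j) \<in> l2 J" for j
    using Q chol_l2 by (simp add: selfadjoint_idempotent_def l2_linear_l2)
  have X_nonneg: "X j \<ge> 0" for j
    unfolding X_def using l2_summable[OF Qchol] by (intro suminf_nonneg) auto
  have "X summable_on UNIV"
    using X_nonneg selfadjoint_idempotent_norm_bounds(1)[OF Q chol_l2]
    by (intro summable_on_comparison_test[OF chol_norm_summable]) (auto simp: X_def)
  then have "((\<lambda>j. of_real (X j) :: complex) has_sum of_real (\<Sum>\<^sub>\<infinity>j. X j)) UNIV"
    by (intro has_sum_of_real has_sum_infsum)
  moreover have "l2_inner (chol j) (Q (chol j)) = of_real (X j)" for j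
    unfolding X_def using Q chol_l2 by (rule selfadjoint_idempotent_inner_self)
  ultimately have "Re (trace_op J (\<lambda>v. Q (\<rho> v))) = (\<Sum>\<^sub>\<infinity>j. X j)"
    by (simp add: trace_selfadjoint_idempotent[OF Q] infsumI)
  also have "\<dots> \<ge> X j0"
    using finite_sum_le_infsum[OF \<open>X summable_on UNIV\<close>, of "{j0}"] X_nonneg by simp
  finally have "X j0 \<le> Re (trace_op J (\<lambda>v. Q (\<rho> v)))" .
  moreover obtain i where "Q (chol j0) i \<noteq> 0"
    using nonzero by (auto simp: fun_eq_iff)
  then have "0 < X j0"
    unfolding X_def using l2_summable[OF Qchol] by (intro suminf_pos2[of _ i]) auto
  ultimately show ?thesis
    by simp
qed

lemma chol_nonzero: "\<exists>j. chol j \<noteq> 0"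
proof (rule ccontr)
  assume "\<not> ?thesis"
  then have "Re (\<rho> (basis_vec m) m) = 0" if "m \<in> J" for m
    using rho_basis_vec_eq_chol_sum[OF that] by simp
  then have "((\<lambda>m. Re (\<rho> (basis_vec m) m)) has_sum 0) J"
    by (rule has_sum_0)
  moreover have "((\<lambda>m. Re (\<rho> (basis_vec m) m)) has_sum 1) J"
    using density by (simp add: density_op_def)
  ultimately show False
    using has_sum_unique by fastforce
qed

lemma trace_commuting_projectors_pos:
  assumes "projector J A" "projector J B" "\<And>x. x \<in> l2 J \<Longrightarrow> A (B x) = B (A x)"
    and "A (B (chol j)) \<noteq> 0"
  shows "Re (trace_op J (\<lambda>v. A (B (\<rho> v)))) > 0"
proof -
  have "selfadjoint_idempotent J (\<lambda>x. A (B x))"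
    using assms(1,2) by (intro selfadjoint_idempotent_comp[of J A B] projector_imp_selfadjoint_idempotent assms(3))
  with assms(4) show ?thesis
    using trace_selfadjoint_idempotent_pos[of "\<lambda>x. A (B x)" j] by simp
qed

end

section \<open>A nonvanishing cycle for a pure vector\<close>

lemma nonempty_binary_set_without:
  fixes B :: "nat set"
  assumes "B \<subseteq> {0, 1}" "B \<noteq> {}" "c \<in> {0, 1}" "c \<notin> B"
  shows "B = {1 - c}"
proof -
  have "B \<subseteq> {1 - c}"
    using assms(1,3,4) by auto
  with assms(2) show ?thesis
    by (simp add: subset_singleton_iff)
qed

locale binary_idempotent_cycle =
  fixes n :: nat and V :: "'v::ab_group_add set" and P :: "nat \<Rightarrow> nat \<Rightarrow> 'v \<Rightarrow> 'v"
    and \<psi> :: 'v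
  assumes n_pos: "0 < n"
    and closed: "\<And>i a x. i < n \<Longrightarrow> a \<in> {0, 1} \<Longrightarrow> x \<in> V \<Longrightarrow> P i a x \<in> V"
    and additive: "\<And>i a x y. i < n \<Longrightarrow> a \<in> {0, 1} \<Longrightarrow> x \<in> V \<Longrightarrow> y \<in> V \<Longrightarrow>
      P i a (x + y) = P i a x + P i a y"
    and idempotent: "\<And>i a x. i < n \<Longrightarrow> a \<in> {0, 1} \<Longrightarrow> x \<in> V \<Longrightarrow> P i a (P i a x) = P i a x"
    and complementary: "\<And>i x. i < n \<Longrightarrow> x \<in> V \<Longrightarrow> P i 0 x + P i 1 x = x"
    and psi: "\<psi> \<in> V" and psi_nonzero: "\<psi> \<noteq> 0"
begin

lemma complementary_other: "i < n \<Longrightarrow> a \<in> {0, 1} \<Longrightarrow> x \<in> V \<Longrightarrow> P i a x + P i (1 - a) x = x"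
  using complementary by (auto simp: add.commute)

lemma P_zero: "i < n \<Longrightarrow> a \<in> {0, 1} \<Longrightarrow> 0 \<in> V \<Longrightarrow> P i a 0 = 0"
  using additive[of i a 0 0] by simp

lemma next_index: "i < n \<Longrightarrow> Suc i mod n < n"
  using n_pos by simp

definition edge :: "nat \<Rightarrow> nat \<Rightarrow> nat \<Rightarrow> bool" where
  "edge i a b \<longleftrightarrow> a \<in> {0, 1} \<and> b \<in> {0, 1} \<and> P i a (P (Suc i mod n) b \<psi>) \<noteq> 0"

lemma edge_exists:
  assumes i: "i < n" and a: "a \<in> {0, 1}" and nonzero: "P i a \<psi> \<noteq> 0"
  shows "\<exists>b. edge i a b"
proof (rule ccontr)
  assume "\<nexists>b. edge i a b"
  then have "P i a (P (Suc i mod n) b \<psi>) = 0" if "b \<in> {0, 1}" for b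
    using a that by (auto simp: edge_def)
  moreover have "P i a \<psi> = P i a (P (Suc i mod n) 0 \<psi> + P (Suc i mod n) 1 \<psi>)"
    using complementary[OF next_index[OF i] psi] by simp
  then have "P i a \<psi> = P i a (P (Suc i mod n) 0 \<psi>) + P i a (P (Suc i mod n) 1 \<psi>)"
    using i a psi by (simp add: additive closed next_index)
  ultimately show False
    using nonzero by simp
qed

lemma edge_target_nonzero:
  assumes "i < n" "edge i a b"
  shows "P (Suc i mod n) b \<psi> \<noteq> 0"
proof
  assume "P (Suc i mod n) b \<psi> = 0"
  then have "P i a (P (Suc i mod n) b \<psi>) = 0"
    using assms P_zero closed[OF next_index _ psi] by (metis edge_def)
  with assms show False
    by (simp add: edge_def)
qed

lemma edge_parallel:
  assumes i: "i < n" and a: "a \<in> {0, 1}" and b: "b \<in> {0, 1}"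
    and "\<not> edge i a (1 - b)" "\<not> edge i (1 - a) b"
  shows "P i a \<psi> = P (Suc i mod n) b \<psi>"
proof -
  let ?j = "Suc i mod n"
  have j: "?j < n"
    using i by (rule next_index)
  have zero: "P i a (P ?j (1 - b) \<psi>) = 0" "P i (1 - a) (P ?j b \<psi>) = 0"
    using assms by (auto simp: edge_def)
  have "P i a \<psi> = P i a (P ?j b \<psi> + P ?j (1 - b) \<psi>)"
    using complementary_other[OF j b psi] by simp
  also have "\<dots> = P i a (P ?j b \<psi>) + P i a (P ?j (1 - b) \<psi>)"
    by (intro additive closed) (use i j a b psi in auto)
  also have "\<dots> = P i a (P ?j b \<psi>) + P i (1 - a) (P ?j b \<psi>)"
    using zero by simp
  also have "\<dots> = P ?j b \<psi>"
    using complementary_other[OF i a closed[OF j b psi]] .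
  finally show ?thesis .
qed

lemma outcomes_distinct:
  assumes i: "i < n"
  shows "P i 0 \<psi> \<noteq> P i 1 \<psi>"
proof
  assume eq: "P i 0 \<psi> = P i 1 \<psi>"
  have "P i 0 \<psi> = P i 0 (P i 0 \<psi> + P i 1 \<psi>)"
    using complementary[OF i psi] by simp
  also have "\<dots> = P i 0 \<psi> + P i 0 (P i 1 \<psi>)"
    using i psi by (simp add: additive closed idempotent)
  finally have "P i 0 (P i 1 \<psi>) = 0"
    by simp
  then have "P i 0 \<psi> = 0"
    using eq i psi by (metis idempotent insert_iff)
  then show False
    using complementary[OF i psi] eq psi_nonzero by simp
qed

primrec reach :: "nat \<Rightarrow> nat \<Rightarrow> nat set" where
  "reach c 0 = {c}"
| "reach c (Suc k) = {b. \<exists>a\<in>reach c k. edge k a b}"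

lemma reach_binary: "c \<in> {0, 1} \<Longrightarrow> reach c k \<subseteq> {0, 1}"
  by (cases k) (auto simp: edge_def)

lemma reach_nonzero:
  assumes "P 0 c \<psi> \<noteq> 0" "k \<le> n" "b \<in> reach c k"
  shows "P (k mod n) b \<psi> \<noteq> 0"
proof (cases k)
  case (Suc k')
  with assms edge_target_nonzero[of k'] show ?thesis
    by auto
qed (use assms in simp)

lemma reach_nonempty:
  assumes c: "c \<in> {0, 1}" "P 0 c \<psi> \<noteq> 0"
  shows "k \<le> n \<Longrightarrow> reach c k \<noteq> {}"
proof (induction k)
  case (Suc k)
  then obtain a where a: "a \<in> reach c k"
    by auto
  with c Suc.prems have "P k a \<psi> \<noteq> 0"
    using reach_nonzero[of c k a] by simp
  with a c Suc.prems obtain b where "edge k a b"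
    using edge_exists reach_binary by (metis Suc_le_lessD subset_iff)
  with a show ?case
    by auto
qed simp

lemma reach_meet_propagates:
  assumes c: "c \<in> {0, 1}" "P 0 c \<psi> \<noteq> 0" and "k \<le> l" "l \<le> n"
    and "reach c k \<inter> reach c' k \<noteq> {}"
  shows "reach c l \<inter> reach c' l \<noteq> {}"
  using assms(3-)
proof (induction l)
  case (Suc l)
  show ?case
  proof (cases "k = Suc l")
    case False
    with Suc obtain a where a: "a \<in> reach c l" "a \<in> reach c' l"
      by auto
    with c Suc.prems have "P l a \<psi> \<noteq> 0"
      using reach_nonzero[of c l a] by simp
    with a c Suc.prems obtain b where "edge l a b"
      using edge_exists reach_binary by (metis Suc_le_lessD subset_iff)
    with a show ?thesis
      by auto
  qed (use Suc.prems in simp)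
qed simp

lemma reach_walk:
  "b \<in> reach c k \<Longrightarrow> \<exists>t. t 0 = c \<and> t k = b \<and> (\<forall>j<k. edge j (t j) (t (Suc j)))"
proof (induction k arbitrary: b)
  case (Suc k)
  then obtain a where "a \<in> reach c k" "edge k a b"
    by auto
  moreover from Suc.IH[OF \<open>a \<in> reach c k\<close>] obtain t
    where "t 0 = c" "t k = a" "\<forall>j<k. edge j (t j) (t (Suc j))"
    by blast
  ultimately show ?case
    by (intro exI[of _ "t(Suc k := b)"]) (auto simp: less_Suc_eq)
qed auto

lemma closed_walk_imp_assignment:
  assumes "c \<in> reach c n"
  shows "\<exists>t. (\<forall>i<n. t i \<in> {0, 1}) \<and> (\<forall>i<n. P i (t i) (P ((i + 1) mod n) (t ((i + 1) mod n)) \<psi>) \<noteq> 0)"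
proof -
  obtain t where t: "t 0 = c" "t n = c" "\<forall>j<n. edge j (t j) (t (Suc j))"
    using reach_walk[OF assms] by blast
  have "t ((i + 1) mod n) = t (Suc i)" if "i < n" for i
    using t(1,2) that by (cases "Suc i = n") auto
  with t(3) show ?thesis
    by (intro exI[of _ t]) (auto simp: edge_def)
qed

lemma separated_reach_complement:
  assumes "P 0 1 \<psi> \<noteq> 0" "k \<le> n" "reach 0 k \<inter> reach 1 k = {}" "a \<in> reach 0 k" "a \<in> {0, 1}"
  shows "reach 1 k = {1 - a}"
  using assms reach_nonempty[of 1 k] by (intro nonempty_binary_set_without reach_binary) auto

lemma separated_walks_preserve_vector:
  assumes nonzero: "P 0 0 \<psi> \<noteq> 0" "P 0 1 \<psi> \<noteq> 0"
    and apart: "\<And>k. k \<le> n \<Longrightarrow> reach 0 k \<inter> reach 1 k = {}"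
  shows "k \<le> n \<Longrightarrow> a \<in> reach 0 k \<Longrightarrow> P (k mod n) a \<psi> = P 0 0 \<psi>"
proof (induction k arbitrary: a)
  case (Suc k b)
  then obtain a where a: "a \<in> reach 0 k" "edge k a b"
    by auto
  have k: "k < n"
    using Suc.prems by simp
  have ab: "a \<in> {0, 1}" "b \<in> {0, 1}"
    using a(2) by (auto simp: edge_def)
  have "reach 1 k = {1 - a}"
    using k by (intro separated_reach_complement[OF nonzero(2) _ apart[of k] a(1) ab(1)]) simp_all
  moreover have "reach 1 (Suc k) = {1 - b}"
    using Suc.prems
    by (intro separated_reach_complement[OF nonzero(2) _ apart[of "Suc k"] _ ab(2)]) simp_all
  ultimately have "\<not> edge k (1 - a) b" "\<not> edge k a (1 - b)"
    using a Suc.prems(2) apart[OF Suc.prems(1)] ab by auto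
  then have "P k a \<psi> = P (Suc k mod n) b \<psi>"
    using k ab by (intro edge_parallel)
  with Suc.IH[OF _ a(1)] k show ?case
    by simp
qed simp

theorem exists_nonvanishing_cycle:
  "\<exists>t. (\<forall>i<n. t i \<in> {0, 1}) \<and> (\<forall>i<n. P i (t i) (P ((i + 1) mod n) (t ((i + 1) mod n)) \<psi>) \<noteq> 0)"
proof (rule ccontr)
  assume "\<not> ?thesis"
  then have no_return: "c \<notin> reach c n" for c
    using closed_walk_imp_assignment by blast
  have return_other: "reach c n = {1 - c}" "P 0 (1 - c) \<psi> \<noteq> 0"
    if c: "c \<in> {0, 1}" "P 0 c \<psi> \<noteq> 0" for c
  proof -
    show "reach c n = {1 - c}"
      using reach_nonempty[OF c] reach_binary[OF c(1), of n] no_return[of c] c(1)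
      by (intro nonempty_binary_set_without) auto
    then show "P 0 (1 - c) \<psi> \<noteq> 0"
      using reach_nonzero[OF c(2), of n "1 - c"] by simp
  qed
  have nonzero: "P 0 0 \<psi> \<noteq> 0" "P 0 1 \<psi> \<noteq> 0"
    using return_other[of 0] return_other[of 1] outcomes_distinct[OF n_pos] by auto
  \<comment> \<open>Walks from 0 and from 1 that met would end in reach 0 n \<inter> reach 1 n = {1} \<inter> {0}.\<close>
  have apart: "reach 0 k \<inter> reach 1 k = {}" if "k \<le> n" for k
    using reach_meet_propagates[of 0 k n 1] that nonzero return_other(1)[of 0] return_other(1)[of 1]
    by auto
  have "1 \<in> reach 0 n"
    using return_other(1)[of 0] nonzero by simp
  then have "P (n mod n) 1 \<psi> = P 0 0 \<psi>"
    by (intro separated_walks_preserve_vector[OF nonzero apart]) simp_all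
  then show False
    using outcomes_distinct[OF n_pos] by simp
qed

end

section \<open>Quantum behaviours\<close>

lemma projectors_binary_idempotent_cycle:
  assumes "0 < n"
    and proj: "\<forall>i<n. \<forall>a\<in>{0, 1}. projector J (P i a)"
    and compl: "\<forall>i<n. \<forall>x\<in>l2 J. (\<lambda>k. P i 0 x k + P i 1 x k) = x"
    and "\<psi> \<in> l2 J" "\<psi> \<noteq> 0"
  shows "binary_idempotent_cycle n (l2 J) P \<psi>"
proof -
  have lin: "l2_linear J (P i a)" if "i < n" "a \<in> {0, 1}" for i a
    using proj that by (blast intro: bounded_linear_op_imp_l2_linear projector_def[THEN iffD1, THEN conjunct1])
  show ?thesis
  proof
    fix i a :: nat and x
    assume "i < n" "a \<in> {0, 1}" "x \<in> l2 J"
    then show "P i a x \<in> l2 J"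
      using lin l2_linear_l2 by blast
  next
    fix i a :: nat and x y
    assume "i < n" "a \<in> {0, 1}" "x \<in> l2 J" "y \<in> l2 J"
    then show "P i a (x + y) = P i a x + P i a y"
      using l2_linear_lincomb[OF lin, of i a x y 1] by (simp add: plus_fun_def)
  next
    fix i a :: nat and x
    assume "i < n" "a \<in> {0, 1}" "x \<in> l2 J"
    then show "P i a (P i a x) = P i a x"
      using proj by (auto simp: projector_def)
  next
    fix i :: nat and x
    assume "i < n" "x \<in> l2 J"
    then show "P i 0 x + P i 1 x = x"
      using compl by (simp add: plus_fun_def)
  qed fact+
qed

theorem corollary3:
  fixes n :: nat and p :: behavior
  assumes "n \<ge> 3" and "quantum_behavior n p"
  shows "\<not> strongly_contextual n p"
proof -
  obtain J \<rho> P where density: "density_op J \<rho>"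
    and proj: "\<forall>i<n. \<forall>a\<in>{0,1}. projector J (P i a)"
    and compl: "\<forall>i<n. \<forall>x\<in>l2 J. (\<lambda>k. P i 0 x k + P i 1 x k) = x"
    and commute: "\<forall>i<n. \<forall>a\<in>{0,1}. \<forall>b\<in>{0,1}. \<forall>x\<in>l2 J.
           P i a (P ((i + 1) mod n) b x) = P ((i + 1) mod n) b (P i a x)"
    and prob: "\<forall>i<n. \<forall>x\<in>{0,1}. \<forall>y\<in>{0,1}.
           complex_of_real (p i x y) = trace_op J (\<lambda>v. P i x (P ((i + 1) mod n) y (\<rho> v)))"
    using assms(2) unfolding quantum_behavior_def by blast
  \<comment> \<open>Only \<open>0 < n\<close> is used below: the argument works for every cycle length.\<close>
  interpret density_operator J \<rho>
    using density by unfold_locales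
  obtain j0 where "chol j0 \<noteq> 0"
    using chol_nonzero by blast
  interpret binary_idempotent_cycle n "l2 J" P "chol j0"
    using assms(1) proj compl chol_l2 \<open>chol j0 \<noteq> 0\<close> by (intro projectors_binary_idempotent_cycle) auto
  obtain t where t: "\<forall>i<n. t i \<in> {0, 1}"
    and nonvanishing: "\<forall>i<n. P i (t i) (P ((i + 1) mod n) (t ((i + 1) mod n)) (chol j0)) \<noteq> 0"
    using exists_nonvanishing_cycle by blast
  have "p i (t i) (t ((i + 1) mod n)) > 0" if i: "i < n" for i
  proof -
    let ?j = "(i + 1) mod n"
    have j: "?j < n" and a: "t i \<in> {0, 1}" and b: "t ?j \<in> {0, 1}"
      using t i n_pos by auto
    have "Re (trace_op J (\<lambda>v. P i (t i) (P ?j (t ?j) (\<rho> v)))) > 0"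
      using proj commute nonvanishing i j a b
      by (intro trace_commuting_projectors_pos[of "P i (t i)" "P ?j (t ?j)" j0]) blast+
    with prob i j a b show ?thesis
      by (metis Re_complex_of_real)
  qed
  with t show ?thesis
    unfolding strongly_contextual_def by blast
qed

end
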